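(* Let $K\ge1$, fix $t_1,t_2\in\mathbb C$, and let $M\in\mathcal M$. If $D(M)<2K^2-3K$ then $\det M=0$. If $D(M)=2K^2-3K$ and $\det M\ne0$, then the column degrees $D_1(M),\dots,D_{2K}(M)$ are, in some order, exactly the distinct values $-1,0,1,\dots,2K-2$.
   Context: For integers $r$ and nonnegative integers $E,G$ define \[ I(r,E,G)=\frac{1}{2\pi i}\oint_{|u|=2}\frac{u^r\exp\left(\frac{t_1}{u-1}+\frac{t_2}{u+1}\right)}{(u-1)^E(u+1)^G}\,du \] (positively oriented circle). Let $\mathcal M=\mathcal M_{2K}$ be the set of $2K\times 2K$ matrices $M=(M_{i,j})$ with $M_{i,j}=I(c_j+r_i,E_j,G_j)$, where $r_1,\dots,r_{2K},c_1,\dots,c_{2K}\in\mathbb Z$ and $E_j,G_j$ are nonnegative integers. The degree of the entry $M_{i,j}$ is $d_{i,j}=c_j+r_i-E_j-G_j$, the degree of column $J$ is $D_J(M)=\max_i d_{i,J}$, and the total degree is $D(M)=\sum_{J=1}^{2K}D_J(M)$. *)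

theory Defs
  imports "HOL-Complex_Analysis.Complex_Analysis" "Jordan_Normal_Form.Determinant"
begin

definition Iint :: "complex \<Rightarrow> complex \<Rightarrow> int \<Rightarrow> nat \<Rightarrow> nat \<Rightarrow> complex" where
  "Iint t1 t2 r E G = contour_integral (circlepath 0 2)
     (\<lambda>u. u powi r * exp (t1 / (u - 1) + t2 / (u + 1)) / ((u - 1) ^ E * (u + 1) ^ G))
     / (2 * of_real pi * \<i>)"

definition Mmat :: "complex \<Rightarrow> complex \<Rightarrow> nat \<Rightarrow> (nat \<Rightarrow> int) \<Rightarrow> (nat \<Rightarrow> int)
    \<Rightarrow> (nat \<Rightarrow> nat) \<Rightarrow> (nat \<Rightarrow> nat) \<Rightarrow> complex mat" where
  "Mmat t1 t2 n r c E G = mat n n (\<lambda>(i, j). Iint t1 t2 (c j + r i) (E j) (G j))"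

definition entryDeg :: "(nat \<Rightarrow> int) \<Rightarrow> (nat \<Rightarrow> int) \<Rightarrow> (nat \<Rightarrow> nat) \<Rightarrow> (nat \<Rightarrow> nat) \<Rightarrow> nat \<Rightarrow> nat \<Rightarrow> int" where
  "entryDeg r c E G i j = c j + r i - int (E j) - int (G j)"

definition colDeg :: "nat \<Rightarrow> (nat \<Rightarrow> int) \<Rightarrow> (nat \<Rightarrow> int) \<Rightarrow> (nat \<Rightarrow> nat) \<Rightarrow> (nat \<Rightarrow> nat) \<Rightarrow> nat \<Rightarrow> int" where
  "colDeg n r c E G j = Max ((\<lambda>i. entryDeg r c E G i j) ` {0..<n})"

definition totDeg :: "nat \<Rightarrow> (nat \<Rightarrow> int) \<Rightarrow> (nat \<Rightarrow> int) \<Rightarrow> (nat \<Rightarrow> nat) \<Rightarrow> (nat \<Rightarrow> nat) \<Rightarrow> int" where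
  "totDeg n r c E G = (\<Sum>j<n. colDeg n r c E G j)"

end

theory Submission
  imports Defs
begin

text \<open>A nonzero determinant yields a permutation p with M(i, p i) \<noteq> 0 for every row i.
  An entry I(r, E, G) vanishes as soon as r - E - G \<le> -2: the integrand is holomorphic outside
  the unit disc and of order |u|^(-2) at infinity, so the contour can be pushed to infinity.
  Hence d(i, p i) \<ge> -1. Rows with equal r i coincide, so the r i are distinct. If row i0 has
  the largest r, then D(p i) \<ge> d(i0, p i) = d(i, p i) + t i \<ge> t i - 1 for the shifts
  t i = r i0 - r i, which are 2K distinct natural numbers. Their sum is at least
  0 + 1 + \<dots> + (2K - 1), so D(M) \<ge> K(2K - 1) - 2K, and equality forces the shifts to be exactly
  0, \<dots>, 2K - 1 and D(p i) = t i - 1.\<close>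

lemma closed_segment_circlepath_subset:
  fixes \<rho> a b t :: real
  assumes "\<rho> < a" "\<rho> < b"
  shows "closed_segment (circlepath z a t) (circlepath z b t) \<subseteq> - cball z \<rho>"
proof
  fix x assume "x \<in> closed_segment (circlepath z a t) (circlepath z b t)"
  then obtain s where s: "0 \<le> s" "s \<le> 1"
    and x: "x = (1 - s) *\<^sub>R circlepath z a t + s *\<^sub>R circlepath z b t"
    unfolding closed_segment_def by auto
  define e where "e = exp (2 * of_real pi * \<i> * of_real t)"
  have "norm e = 1"
    unfolding e_def norm_exp_eq_Re by simp
  define w where "w = (1 - s) * a + s * b"
  have "x - z = of_real w * e"
    unfolding x circlepath e_def w_def by (simp add: scaleR_conv_of_real algebra_simps)
  with \<open>norm e = 1\<close> have "dist z x = \<bar>w\<bar>"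
    by (simp add: dist_norm norm_minus_commute norm_mult)
  moreover have "\<rho> < w" unfolding w_def
    using convex_bound_lt[of "-a" "-\<rho>" "-b" "1 - s" s] assms s by auto
  ultimately show "x \<in> - cball z \<rho>" by simp
qed

lemma contour_integral_circlepath_eq:
  assumes "f holomorphic_on - cball z \<rho>" "\<rho> < a" "\<rho> < b"
  shows "contour_integral (circlepath z a) f = contour_integral (circlepath z b) f"
  by (rule Cauchy_theorem_homotopic_loops[OF homotopic_loops_linear])
     (use assms closed_segment_circlepath_subset in auto)

lemma contour_integral_circlepath_eq_0_of_decay:
  assumes hol: "f holomorphic_on - cball z \<rho>" and a: "\<rho> < a"
    and decay: "\<And>u. R\<^sub>0 \<le> norm (u - z) \<Longrightarrow> norm (f u) \<le> B / norm (u - z) ^ 2"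
  shows "contour_integral (circlepath z a) f = 0"
proof -
  define I where "I = contour_integral (circlepath z a) f"
  have bound: "norm I \<le> 2 * pi * B / R" if R: "max R\<^sub>0 (max \<rho> 0) < R" for R
  proof -
    have "path_image (circlepath z R) \<subseteq> - cball z \<rho>" using R by auto
    then have "f contour_integrable_on circlepath z R"
      by (intro contour_integrable_continuous_circlepath
          continuous_on_subset[OF holomorphic_on_imp_continuous_on[OF hol]])
    then have "(f has_contour_integral I) (circlepath z R)"
      using contour_integral_circlepath_eq[OF hol a, of R] R
      unfolding I_def by (simp add: has_contour_integral_integral)
    moreover have "norm (f (z + of_real R)) \<le> B / R ^ 2"
      using decay[of "z + of_real R"] R by simp
    then have "0 \<le> B / R ^ 2" using norm_ge_zero order_trans by blast
    ultimately have "norm I \<le> B / R ^ 2 * (2 * pi * R)"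
      using R decay by (intro has_contour_integral_bound_circlepath) auto
    also have "\<dots> = 2 * pi * B / R" using R by (simp add: power2_eq_square)
    finally show ?thesis .
  qed
  have "((\<lambda>R. 2 * pi * B / R) \<longlongrightarrow> 0) at_top"
    by (intro tendsto_divide_0[OF tendsto_const] filterlim_mono[OF filterlim_ident at_top_le_at_infinity order_refl])
  moreover have "eventually (\<lambda>R. norm I \<le> 2 * pi * B / R) at_top"
    using eventually_gt_at_top[of "max R\<^sub>0 (max \<rho> 0)"] by (rule eventually_mono) (rule bound)
  ultimately have "norm I \<le> 0"
    using tendsto_le[OF trivial_limit_at_top_linorder _ tendsto_const] by blast
  then show ?thesis unfolding I_def by simp
qed

definition Iint_integrand :: "complex \<Rightarrow> complex \<Rightarrow> int \<Rightarrow> nat \<Rightarrow> nat \<Rightarrow> complex \<Rightarrow> complex" where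
  "Iint_integrand t1 t2 r E G u =
     u powi r * exp (t1 / (u - 1) + t2 / (u + 1)) / ((u - 1) ^ E * (u + 1) ^ G)"

lemma Iint_eq:
  "Iint t1 t2 r E G = contour_integral (circlepath 0 2) (Iint_integrand t1 t2 r E G) / (2 * of_real pi * \<i>)"
  unfolding Iint_def Iint_integrand_def ..

lemma holomorphic_Iint_integrand: "Iint_integrand t1 t2 r E G holomorphic_on - cball 0 1"
proof -
  have "u \<noteq> 0" "u - 1 \<noteq> 0" "u + 1 \<noteq> 0" if "u \<in> - cball 0 1" for u :: complex
    using that by (auto simp: add_eq_0_iff2)
  then show ?thesis
    unfolding Iint_integrand_def by (intro holomorphic_intros holomorphic_on_power_int) auto
qed

lemma norm_Iint_integrand_le:
  assumes deg: "r + 2 \<le> int E + int G" and u: "2 \<le> norm u"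
  shows "norm (Iint_integrand t1 t2 r E G u) \<le> exp (norm t1 + norm t2) * 2 ^ (E + G) / norm u ^ 2"
proof -
  define R where "R = norm u"
  have R: "2 \<le> R" "0 < R" using u unfolding R_def by auto
  have half: "R / 2 \<le> norm (u - 1)" "R / 2 \<le> norm (u + 1)"
    using norm_triangle_ineq2[of u 1] norm_triangle_ineq2[of u "-1"] R unfolding R_def by auto
  have "norm (t1 / (u - 1)) \<le> norm t1" "norm (t2 / (u + 1)) \<le> norm t2"
    using half R by (auto simp: norm_divide divide_le_eq mult_le_cancel_left1 mult_left_mono)
  then have "norm (t1 / (u - 1) + t2 / (u + 1)) \<le> norm t1 + norm t2"
    by (smt (verit) norm_triangle_ineq)
  then have exp_le: "norm (exp (t1 / (u - 1) + t2 / (u + 1))) \<le> exp (norm t1 + norm t2)"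
    unfolding norm_exp_eq_Re by (smt (verit) abs_Re_le_cmod exp_le_cancel_iff)
  have "(R / 2) ^ E * (R / 2) ^ G \<le> norm ((u - 1) ^ E * (u + 1) ^ G)"
    unfolding norm_mult norm_power using half R by (intro mult_mono power_mono) auto
  then have den_ge: "R ^ (E + G) / 2 ^ (E + G) \<le> norm ((u - 1) ^ E * (u + 1) ^ G)"
    by (simp add: power_add power_divide)
  have "norm (u powi r) = R powi r" by (simp add: norm_power_int R_def)
  also have "\<dots> \<le> R powi (int (E + G) - 2)" using R deg by (intro power_int_increasing) auto
  also have "\<dots> = R ^ (E + G) / R ^ 2" using R by (simp add: power_int_diff power_int_add power_add)
  finally have num_le: "norm (u powi r) \<le> R ^ (E + G) / R ^ 2" .
  have "norm (Iint_integrand t1 t2 r E G u)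
      = norm (u powi r) * norm (exp (t1 / (u - 1) + t2 / (u + 1))) / norm ((u - 1) ^ E * (u + 1) ^ G)"
    unfolding Iint_integrand_def by (simp add: norm_mult norm_divide)
  also have "\<dots> \<le> (R ^ (E + G) / R ^ 2) * exp (norm t1 + norm t2) / (R ^ (E + G) / 2 ^ (E + G))"
    using num_le exp_le den_ge R by (intro frac_le mult_mono) auto
  also have "\<dots> = exp (norm t1 + norm t2) * 2 ^ (E + G) / R ^ 2" using R by (simp add: field_simps)
  finally show ?thesis unfolding R_def .
qed

lemma Iint_eq_0:
  assumes "r + 2 \<le> int E + int G"
  shows "Iint t1 t2 r E G = 0"
proof -
  have "contour_integral (circlepath 0 2) (Iint_integrand t1 t2 r E G) = 0"
    using norm_Iint_integrand_le[OF assms]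
    by (intro contour_integral_circlepath_eq_0_of_decay[OF holomorphic_Iint_integrand, of 2 2]) auto
  then show ?thesis unfolding Iint_eq by simp
qed

lemma sum_lessThan_card_le:
  fixes T :: "nat set"
  assumes "finite T"
  shows "\<Sum>{..<card T} \<le> \<Sum>T"
  using assms
proof (induction "card T" arbitrary: T)
  case 0
  then show ?case by simp
next
  case (Suc n)
  define m where "m = Max T"
  have "T \<noteq> {}" using Suc.hyps by auto
  then have m: "m \<in> T" using Suc.prems unfolding m_def by simp
  have "T \<subseteq> {..m}" using Suc.prems unfolding m_def by auto
  then have "card T \<le> Suc m" using card_mono[of "{..m}" T] by simp
  then have "n \<le> m" using Suc.hyps by simp
  moreover have "card (T - {m}) = n" using Suc.hyps(2) Suc.prems m by simp
  then have "\<Sum>{..<n} \<le> \<Sum>(T - {m})" using Suc.hyps(1) Suc.prems by blast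
  moreover have "\<Sum>T = m + \<Sum>(T - {m})" using Suc.prems m by (simp add: sum.remove)
  ultimately show ?case by (simp flip: Suc.hyps(2))
qed

lemma sum_lessThan_card_less:
  fixes T :: "nat set"
  assumes T: "finite T" "T \<noteq> {..<card T}"
  shows "\<Sum>{..<card T} < \<Sum>T"
proof -
  have "\<not> T \<subseteq> {..<card T}" using T card_subset_eq[of "{..<card T}" T] by auto
  then obtain m where m: "m \<in> T" "card T \<le> m" by (meson lessThan_iff not_less subsetI)
  have "card (T - {m}) = card T - 1" using T m by simp
  then have "\<Sum>{..<card T - 1} \<le> \<Sum>(T - {m})"
    using sum_lessThan_card_le[of "T - {m}"] T by simp
  moreover have "\<Sum>T = m + \<Sum>(T - {m})" using T m by (simp add: sum.remove)
  moreover have "\<Sum>{..<card T} = card T - 1 + \<Sum>{..<card T - 1}"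
    using m by (cases "card T") auto
  moreover have "0 < card T" using T m card_gt_0_iff by blast
  ultimately show ?thesis using m by linarith
qed

lemma double_sum_lessThan: "2 * (\<Sum>i<n. of_nat i) = of_nat n * (of_nat n - 1 :: 'a :: comm_ring_1)"
  by (induction n) (simp_all add: algebra_simps)

lemma bij_betw_int_minus_1: "bij_betw (\<lambda>x. int x - 1) {..<n} {-1..int n - 2}"
  by (rule bij_betw_byWitness[where f' = "\<lambda>y. nat (y + 1)"]) auto

lemma sum_ge_of_injective_minorant:
  fixes D :: "nat \<Rightarrow> int" and t :: "nat \<Rightarrow> nat"
  assumes inj: "inj_on t {..<n}" and ge: "\<And>j. j < n \<Longrightarrow> int (t j) - 1 \<le> D j"
  shows "int n * (int n - 3) \<le> 2 * (\<Sum>j<n. D j)"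
    and "2 * (\<Sum>j<n. D j) = int n * (int n - 3) \<Longrightarrow> bij_betw D {..<n} {-1..int n - 2}"
proof -
  define T where "T = t ` {..<n}"
  have T: "finite T" "card T = n" using inj by (auto simp: T_def card_image)
  have "2 * (\<Sum>j<n. int (t j) - 1) = 2 * int (\<Sum>T) - 2 * int n"
    unfolding T_def using inj by (simp add: sum_subtractf sum.reindex)
  moreover have "2 * int (\<Sum>{..<n}) = int n * (int n - 1)"
    using double_sum_lessThan[of n, where 'a = int] by (simp add: of_nat_sum)
  ultimately have gap: "2 * (\<Sum>j<n. int (t j) - 1) - int n * (int n - 3) = 2 * (int (\<Sum>T) - int (\<Sum>{..<n}))"
    by (simp add: algebra_simps)
  have "\<Sum>{..<n} \<le> \<Sum>T" using sum_lessThan_card_le[OF T(1)] T(2) by simp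
  then have "int (\<Sum>{..<n}) \<le> int (\<Sum>T)" by (simp only: of_nat_le_iff)
  moreover have sum_le: "(\<Sum>j<n. int (t j) - 1) \<le> (\<Sum>j<n. D j)" using ge by (intro sum_mono) auto
  ultimately show lower: "int n * (int n - 3) \<le> 2 * (\<Sum>j<n. D j)" using gap by (smt (verit))
  assume eq: "2 * (\<Sum>j<n. D j) = int n * (int n - 3)"
  have "T = {..<n}"
  proof (rule ccontr)
    assume "T \<noteq> {..<n}"
    then have "\<Sum>{..<n} < \<Sum>T" using sum_lessThan_card_less[OF T(1)] T(2) by simp
    then have "int (\<Sum>{..<n}) < int (\<Sum>T)" by (simp only: of_nat_less_iff)
    then show False using gap sum_le eq by (smt (verit))
  qed
  then have t_bij: "bij_betw t {..<n} {..<n}" using inj unfolding T_def bij_betw_def by simp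
  have "(\<Sum>j<n. D j - (int (t j) - 1)) = 0"
    using gap sum_le eq \<open>T = {..<n}\<close> by (simp add: sum_subtractf)
  then have "D j = int (t j) - 1" if "j < n" for j
    using sum_nonneg_eq_0_iff[of "{..<n}" "\<lambda>j. D j - (int (t j) - 1)"] ge that by auto
  then have "bij_betw D {..<n} {-1..int n - 2} \<longleftrightarrow> bij_betw ((\<lambda>x. int x - 1) \<circ> t) {..<n} {-1..int n - 2}"
    by (intro bij_betw_cong) auto
  then show "bij_betw D {..<n} {-1..int n - 2}"
    using bij_betw_trans[OF t_bij bij_betw_int_minus_1] by simp
qed

lemma det_nonzero_obtains_permutation:
  assumes A: "A \<in> carrier_mat n n" and det: "det A \<noteq> 0"
  obtains p where "p permutes {..<n}" "\<And>i. i < n \<Longrightarrow> A $$ (i, p i) \<noteq> 0"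
proof -
  have "(\<Sum>p \<in> {p. p permutes {..<n}}. signof p * (\<Prod>i<n. A $$ (i, p i))) \<noteq> 0"
    using det det_def'[OF A] by (simp add: atLeast0LessThan)
  then obtain p where p: "p \<in> {p. p permutes {..<n}}" and nz: "signof p * (\<Prod>i<n. A $$ (i, p i)) \<noteq> 0"
    by (rule sum.not_neutral_contains_not_neutral)
  have "A $$ (i, p i) \<noteq> 0" if "i < n" for i
  proof
    assume "A $$ (i, p i) = 0"
    then have "(\<Prod>i<n. A $$ (i, p i)) = 0" using that by (intro prod_zero) auto
    then show False using nz by simp
  qed
  then show thesis using p that by blast
qed

lemma det_Mmat_eq_0_if_not_inj:
  assumes "\<not> inj_on r {..<n}"
  shows "det (Mmat t1 t2 n r c E G) = 0"
proof -
  obtain i j where ij: "i < n" "j < n" "i \<noteq> j" "r i = r j"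
    using assms unfolding inj_on_def by auto
  have "row (Mmat t1 t2 n r c E G) i = row (Mmat t1 t2 n r c E G) j"
    using ij by (intro eq_vecI) (auto simp: Mmat_def)
  moreover have "Mmat t1 t2 n r c E G \<in> carrier_mat n n" unfolding Mmat_def by simp
  ultimately show ?thesis using det_identical_rows ij by blast
qed

lemma entryDeg_ge_if_Iint_nonzero:
  assumes "Iint t1 t2 (c j + r i) (E j) (G j) \<noteq> 0"
  shows "-1 \<le> entryDeg r c E G i j"
  using Iint_eq_0 assms unfolding entryDeg_def by force

lemma colDeg_ge_injective_shift:
  assumes inj: "inj_on r {..<n}" and p: "p permutes {..<n}"
    and ent: "\<And>i. i < n \<Longrightarrow> -1 \<le> entryDeg r c E G i (p i)"
  obtains t :: "nat \<Rightarrow> nat"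
  where "inj_on t {..<n}" "\<And>j. j < n \<Longrightarrow> int (t j) - 1 \<le> colDeg n r c E G j"
proof
  define R where "R = Max (r ` {..<n})"
  define q where "q = inv_into UNIV p"
  define t where "t j = nat (R - r (q j))" for j
  have inv_p: "q j < n" "p (q j) = j" if "j < n" for j
    using permutes_in_image[OF permutes_inv[OF p]] permutes_inverses[OF p] that unfolding q_def by auto
  have t: "int (t j) = R - r (q j)" if "j < n" for j
    using inv_p[OF that] unfolding t_def R_def by simp
  show "inj_on t {..<n}"
  proof (rule inj_onI)
    fix x y assume x: "x \<in> {..<n}" and y: "y \<in> {..<n}" and "t x = t y"
    then have "r (q x) = r (q y)" using t[of x] t[of y] by simp
    then have "q x = q y" by (rule inj_onD[OF inj]) (use inv_p x y in auto)
    then show "x = y" using inv_p(2) x y by (metis lessThan_iff)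
  qed
  fix j assume j: "j < n"
  have "R \<in> r ` {..<n}" unfolding R_def using j by (intro Max_in) auto
  then obtain i\<^sub>0 where i\<^sub>0: "i\<^sub>0 < n" "r i\<^sub>0 = R" by auto
  have "entryDeg r c E G i\<^sub>0 j \<le> colDeg n r c E G j"
    using i\<^sub>0 unfolding colDeg_def by simp
  moreover have "entryDeg r c E G i\<^sub>0 j = entryDeg r c E G (q j) j + int (t j)"
    using t[OF j] i\<^sub>0 unfolding entryDeg_def by simp
  ultimately show "int (t j) - 1 \<le> colDeg n r c E G j"
    using ent[OF inv_p(1)[OF j]] inv_p(2)[OF j] by simp
qed

lemma totDeg_bounds_if_det_Mmat_nonzero:
  assumes det: "det (Mmat t1 t2 n r c E G) \<noteq> 0"
  shows "int n * (int n - 3) \<le> 2 * totDeg n r c E G"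
    and "2 * totDeg n r c E G = int n * (int n - 3) \<Longrightarrow> bij_betw (colDeg n r c E G) {..<n} {-1..int n - 2}"
proof -
  have inj: "inj_on r {..<n}" using det det_Mmat_eq_0_if_not_inj by blast
  obtain p where p: "p permutes {..<n}" and nz: "\<And>i. i < n \<Longrightarrow> Mmat t1 t2 n r c E G $$ (i, p i) \<noteq> 0"
    using det_nonzero_obtains_permutation[of _ n, OF _ det] by (auto simp: Mmat_def)
  have "-1 \<le> entryDeg r c E G i (p i)" if "i < n" for i
    using nz[OF that] permutes_in_image[OF p] that
    by (intro entryDeg_ge_if_Iint_nonzero) (auto simp: Mmat_def)
  then obtain t where "inj_on t {..<n}" "\<And>j. j < n \<Longrightarrow> int (t j) - 1 \<le> colDeg n r c E G j"
    using colDeg_ge_injective_shift[OF inj p] by blast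
  note bounds = sum_ge_of_injective_minorant[OF this, folded totDeg_def]
  show "int n * (int n - 3) \<le> 2 * totDeg n r c E G" by (rule bounds(1))
  show "2 * totDeg n r c E G = int n * (int n - 3) \<Longrightarrow> bij_betw (colDeg n r c E G) {..<n} {-1..int n - 2}"
    by (rule bounds(2))
qed

theorem mainTheorem7:
  fixes K :: nat and t1 t2 :: complex
    and r c :: "nat \<Rightarrow> int" and E G :: "nat \<Rightarrow> nat"
  assumes "K \<ge> 1"
  shows "(totDeg (2*K) r c E G < 2 * int K ^ 2 - 3 * int K
            \<longrightarrow> det (Mmat t1 t2 (2*K) r c E G) = 0)
       \<and> ((totDeg (2*K) r c E G = 2 * int K ^ 2 - 3 * int K
             \<and> det (Mmat t1 t2 (2*K) r c E G) \<noteq> 0)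
            \<longrightarrow> bij_betw (colDeg (2*K) r c E G) {0..<2*K} {-1 .. 2 * int K - 2})"
proof -
  have size: "int (2 * K) * (int (2 * K) - 3) = 2 * (2 * int K ^ 2 - 3 * int K)"
    by (simp add: power2_eq_square algebra_simps)
  note bounds = totDeg_bounds_if_det_Mmat_nonzero[of t1 t2 "2 * K" r c E G, unfolded size]
  show ?thesis
  proof (intro conjI impI)
    assume less: "totDeg (2*K) r c E G < 2 * int K ^ 2 - 3 * int K"
    show "det (Mmat t1 t2 (2*K) r c E G) = 0"
    proof (rule ccontr)
      assume "det (Mmat t1 t2 (2*K) r c E G) \<noteq> 0"
      from bounds(1)[OF this] less show False by simp
    qed
  next
    assume "totDeg (2*K) r c E G = 2 * int K ^ 2 - 3 * int K \<and> det (Mmat t1 t2 (2*K) r c E G) \<noteq> 0"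
    then show "bij_betw (colDeg (2*K) r c E G) {0..<2*K} {-1 .. 2 * int K - 2}"
      using bounds(2) by (simp add: atLeast0LessThan)
  qed
qed

end
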